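(* Suppose that $\|\tilde{\mu}_{m}-\mu\|_\infty=\mathcal{O}_{\mathrm{P}}(a_m)$ and $\|\tilde{\pi}_{m}-\pi\|_\infty=\mathcal{O}_{\mathrm{P}}(a_m)$ for sufficiently large $m$, where $\{a_m\}$ is a deterministic sequence with $a_m\to 0$. Suppose in addition that, for sufficiently large $m$ and conditionally on $\tilde{\mu}_{m}(\cdot)$, the joint density $b_m(x,u)$ of $(\mu(Z),\eta_m(Z))$, where $\eta_m=a_m^{-1}(\tilde{\mu}_{m}-\mu)$, and its partial derivatives $\partial_x b_m(x,u)$, $\partial_x^2 b_m(x,u)$ exist for all $x,u$ and there are non-negative functions $\bar b_{m,i}(u)$, $i=0,1,2$, with $b_m(x,u)\le \bar b_{m,0}(u)$, $|\partial_x b_m(x,u)|\le \bar b_{m,1}(u)$, $|\partial_x^2 b_m(x,u)|\le \bar b_{m,2}(u)$ for all $x,u$ and $\sup_m\int_{\mathbb{R}}|u|^r\bar b_{m,i}(u)\,du<\infty$ for $r=0,1,2,3$ and $i=0,1,2$. Suppose also that $f_\mu(q)>0$. Then $\mathcal{F}_q[\tilde{\mu}_{m}]-\mathcal{F}_q[\mu]=\mathcal{O}_{\mathrm{P}}(a_m)$.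
   Context: $Z$ denotes the risk factors, $\mu(z)=\mathrm{E}[X\mid Z=z]$, $\pi(z)=\mathrm{E}[Y\mid Z=z]$, and $\tilde{\mu}_{m},\tilde{\pi}_{m}$ are first-stage fitted approximations from $m$ outer-level scenarios. $\|\cdot\|_\infty$ is the essential supremum norm. $q$ is the $\alpha$-VaR of $\mu(Z)$ and $f_\mu$ the density of $\mu(Z)$. For a function $g$, the functional $\mathcal{F}_x[g]$ is the distribution function of $g(Z)$ at $x$, conditional on the fitted functions: $\mathcal{F}_x[g]=\mathrm{Pr}_m\{g(Z)\le x\}$; thus $\mathcal{F}_q[\mu]=\Pr\{\mu(Z)\le q\}$ and $\mathcal{F}_q[\tilde{\mu}_{m}]=\mathrm{Pr}_m\{\tilde{\mu}_{m}(Z)\le q\}$. *)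

theory Defs
  imports "HOL-Probability.Probability"
begin

text \<open>Big-O in probability (inner-probability form, robust to measurability):
  X m = O_P(a m) iff for every eps > 0 there are C, N such that for all m \<ge> N
  there is an event of probability at least 1 - eps on which |X m| \<le> C * a m.\<close>
definition big_OP :: "'w measure \<Rightarrow> (nat \<Rightarrow> 'w \<Rightarrow> ereal) \<Rightarrow> (nat \<Rightarrow> real) \<Rightarrow> bool" where
  "big_OP M X a \<longleftrightarrow>
     (\<forall>\<epsilon>>0. \<exists>C N. \<forall>m\<ge>N. \<exists>A\<in>sets M. measure M A \<ge> 1 - \<epsilon> \<and>
        (\<forall>\<omega>\<in>A. \<bar>X m \<omega>\<bar> \<le> ereal (C * a m)))"

definition sup_norm :: "'z measure \<Rightarrow> ('z \<Rightarrow> real) \<Rightarrow> ereal" where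
  "sup_norm D g = esssup D (\<lambda>z. ereal \<bar>g z\<bar>)"

text \<open>Distribution function F_x[g] = Pr{g(Z) \<le> x}, Z having law D.\<close>
definition cdf_at :: "'z measure \<Rightarrow> ('z \<Rightarrow> real) \<Rightarrow> real \<Rightarrow> real" where
  "cdf_at D g x = measure D {z \<in> space D. g z \<le> x}"

definition VaR :: "'z measure \<Rightarrow> ('z \<Rightarrow> real) \<Rightarrow> real \<Rightarrow> real" where
  "VaR D g \<alpha> = Inf {x. cdf_at D g x \<ge> \<alpha>}"

end

theory Submission
  imports Defs
begin

text \<open>The domination of the joint density of \<open>(\<mu>(Z), \<eta>\<^sub>m(Z))\<close> by \<open>bb 0 m \<omega>\<close>, whose
  integral is at most \<open>B\<close>, bounds the marginal density of \<open>\<mu>(Z)\<close> by \<open>B\<close>; hence \<open>x \<mapsto> \<F>\<^sub>x[\<mu>]\<close>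
  is \<open>B\<close>-Lipschitz. Writing \<open>\<mu>\<^sub>m\<close> for \<open>mut m \<omega>\<close>, since \<open>|\<mu>\<^sub>m - \<mu>| \<le> c = \<parallel>\<mu>\<^sub>m - \<mu>\<parallel>\<^sub>\<infinity>\<close> almost surely,
  \<open>\<F>\<^sub>q\<^sub>-\<^sub>c[\<mu>] \<le> \<F>\<^sub>q[\<mu>\<^sub>m] \<le> \<F>\<^sub>q\<^sub>+\<^sub>c[\<mu>]\<close>, so \<open>|\<F>\<^sub>q[\<mu>\<^sub>m] - \<F>\<^sub>q[\<mu>]| \<le> B c = O\<^sub>P(a\<^sub>m)\<close>.\<close>

lemma measure_Ioc_le_of_joint_density_bound:
  fixes mu g :: "'z \<Rightarrow> real" and b :: "real \<Rightarrow> real \<Rightarrow> real" and bb :: "real \<Rightarrow> real"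
  assumes dist: "distributed D (lborel :: (real \<times> real) measure) (\<lambda>z. (mu z, g z))
      (\<lambda>(x, u). ennreal (b x u))"
    and b_le: "\<And>x u. b x u \<le> bb u"
    and integral_le: "(\<integral>\<^sup>+ u. ennreal (bb u) \<partial>lborel) \<le> ennreal B"
    and "0 \<le> B" and "s \<le> t"
  shows "measure D {z\<in>space D. s < mu z \<and> mu z \<le> t} \<le> B * (t - s)"
proof -
  let ?A = "{s<..t} \<times> (UNIV :: real set)"
  let ?f = "\<lambda>(x, u). ennreal (b x u)"
  have A: "?A \<in> sets (lborel :: (real \<times> real) measure)"
    unfolding lborel_prod[symmetric] by (intro pair_measureI) auto
  have "(\<lambda>p. ?f p * indicator ?A p) \<in> borel_measurable (lborel :: (real \<times> real) measure)"
    using dist A by (intro borel_measurable_times_ennreal borel_measurable_indicator)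
      (simp_all add: distributed_def)
  then have "(\<lambda>p. ?f p * indicator ?A p) \<in> borel_measurable (lborel \<Otimes>\<^sub>M lborel)"
    by (simp only: lborel_prod)
  moreover have "(\<lambda>z. (mu z, g z)) -` ?A \<inter> space D = {z\<in>space D. s < mu z \<and> mu z \<le> t}"
    by auto
  ultimately have "emeasure D {z\<in>space D. s < mu z \<and> mu z \<le> t}
      = (\<integral>\<^sup>+p. ?f p * indicator ?A p \<partial>(lborel \<Otimes>\<^sub>M lborel))"
    using distributed_emeasure[OF dist A] by (simp add: lborel_prod)
  also have "\<dots> = (\<integral>\<^sup>+x. \<integral>\<^sup>+u. ennreal (b x u) * indicator ?A (x, u) \<partial>lborel \<partial>lborel)"
    using \<open>(\<lambda>p. ?f p * indicator ?A p) \<in> borel_measurable (lborel \<Otimes>\<^sub>M lborel)\<close>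
    by (simp add: lborel.nn_integral_fst[symmetric])
  also have "\<dots> \<le> (\<integral>\<^sup>+x. ennreal B * indicator {s<..t} x \<partial>lborel)"
  proof (rule nn_integral_mono)
    fix x :: real
    have "(\<integral>\<^sup>+u. ennreal (b x u) * indicator ?A (x, u) \<partial>lborel)
        \<le> (\<integral>\<^sup>+u. ennreal (bb u) * indicator {s<..t} x \<partial>lborel)"
      by (rule nn_integral_mono) (auto simp: indicator_def intro: ennreal_leI b_le)
    also have "\<dots> \<le> ennreal B * indicator {s<..t} x"
      using integral_le by (cases "x \<in> {s<..t}") auto
    finally show "(\<integral>\<^sup>+u. ennreal (b x u) * indicator ?A (x, u) \<partial>lborel)
        \<le> ennreal B * indicator {s<..t} x" .
  qed
  also have "\<dots> = ennreal (B * (t - s))"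
    using \<open>0 \<le> B\<close> \<open>s \<le> t\<close> by (simp add: nn_integral_cmult_indicator ennreal_mult)
  finally show ?thesis
    unfolding measure_def using \<open>0 \<le> B\<close> \<open>s \<le> t\<close> by (intro enn2real_leI) simp_all
qed

lemma (in prob_space) cdf_at_diff_eq_measure_Ioc:
  assumes "mu \<in> borel_measurable M" and "s \<le> t"
  shows "cdf_at M mu t - cdf_at M mu s = measure M {z\<in>space M. s < mu z \<and> mu z \<le> t}"
proof -
  have "{z\<in>space M. mu z \<le> t} = {z\<in>space M. mu z \<le> s} \<union> {z\<in>space M. s < mu z \<and> mu z \<le> t}"
    using \<open>s \<le> t\<close> by auto
  moreover have "measure M ({z\<in>space M. mu z \<le> s} \<union> {z\<in>space M. s < mu z \<and> mu z \<le> t})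
      = measure M {z\<in>space M. mu z \<le> s} + measure M {z\<in>space M. s < mu z \<and> mu z \<le> t}"
    by (rule finite_measure_Union) (use assms in auto)
  ultimately show ?thesis
    by (simp add: cdf_at_def)
qed

lemma (in prob_space) cdf_at_perturb_le:
  assumes mu: "mu \<in> borel_measurable M" and h: "h \<in> borel_measurable M"
    and lipschitz: "\<And>s t. s \<le> t \<Longrightarrow> cdf_at M mu t - cdf_at M mu s \<le> K * (t - s)"
    and close: "AE z in M. \<bar>h z - mu z\<bar> \<le> c"
  shows "\<bar>cdf_at M h q - cdf_at M mu q\<bar> \<le> K * c"
proof -
  have "cdf_at M h q \<le> cdf_at M mu (q + c)"
    unfolding cdf_at_def
    by (rule finite_measure_mono_AE) (use close mu in \<open>auto elim!: eventually_mono\<close>)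
  moreover have "cdf_at M mu (q - c) \<le> cdf_at M h q"
    unfolding cdf_at_def
    by (rule finite_measure_mono_AE) (use close h in \<open>auto elim!: eventually_mono\<close>)
  moreover have "0 \<le> c"
  proof -
    from close have "AE z in M. 0 \<le> c"
      by (rule eventually_mono) auto
    then show ?thesis
      by simp
  qed
  ultimately show ?thesis
    using lipschitz[of q "q + c"] lipschitz[of "q - c" q] by (simp add: abs_le_iff)
qed

lemma AE_abs_le_of_sup_norm_le:
  assumes "sup_norm D g \<le> ereal c"
  shows "AE z in D. \<bar>g z\<bar> \<le> c"
  using esssup_AE[of "\<lambda>z. ereal \<bar>g z\<bar>" D] assms unfolding sup_norm_def
  by (auto elim!: eventually_mono) (metis ereal_less_eq(3) order_trans)

lemma big_OP_le:
  assumes "big_OP M Y a"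
    and le: "\<And>m \<omega> c. \<bar>Y m \<omega>\<bar> \<le> ereal c \<Longrightarrow> \<bar>X m \<omega>\<bar> \<le> ereal (K * c)"
  shows "big_OP M X a"
  unfolding big_OP_def
proof (intro allI impI)
  fix \<epsilon> :: real
  assume "\<epsilon> > 0"
  then obtain C N where "\<forall>m\<ge>N. \<exists>A\<in>sets M. measure M A \<ge> 1 - \<epsilon> \<and>
      (\<forall>\<omega>\<in>A. \<bar>Y m \<omega>\<bar> \<le> ereal (C * a m))"
    using assms(1) unfolding big_OP_def by blast
  then have "\<forall>m\<ge>N. \<exists>A\<in>sets M. measure M A \<ge> 1 - \<epsilon> \<and>
      (\<forall>\<omega>\<in>A. \<bar>X m \<omega>\<bar> \<le> ereal ((K * C) * a m))"
    by (metis le mult.assoc)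
  then show "\<exists>C N. \<forall>m\<ge>N. \<exists>A\<in>sets M. measure M A \<ge> 1 - \<epsilon> \<and>
      (\<forall>\<omega>\<in>A. \<bar>X m \<omega>\<bar> \<le> ereal (C * a m))"
    by blast
qed

theorem lemma2:
  fixes M :: "'w measure" and D :: "'z measure"
    and mu piZ :: "'z \<Rightarrow> real"
    and mut pit :: "nat \<Rightarrow> 'w \<Rightarrow> 'z \<Rightarrow> real"
    and a :: "nat \<Rightarrow> real" and \<alpha> q :: real and f_mu :: "real \<Rightarrow> real"
    and b b1 b2 :: "nat \<Rightarrow> 'w \<Rightarrow> real \<Rightarrow> real \<Rightarrow> real"
    and bb :: "nat \<Rightarrow> nat \<Rightarrow> 'w \<Rightarrow> real \<Rightarrow> real"
  assumes M: "prob_space M" and D: "prob_space D"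
    and meas_mu: "mu \<in> borel_measurable D" and meas_pi: "piZ \<in> borel_measurable D"
    and meas_mut: "\<And>m \<omega>. mut m \<omega> \<in> borel_measurable D"
    and meas_pit: "\<And>m \<omega>. pit m \<omega> \<in> borel_measurable D"
    and a_pos: "\<And>m. a m > 0" and a_lim: "a \<longlonglongrightarrow> 0"
    and rate_mu: "big_OP M (\<lambda>m \<omega>. sup_norm D (\<lambda>z. mut m \<omega> z - mu z)) a"
    and rate_pi: "big_OP M (\<lambda>m \<omega>. sup_norm D (\<lambda>z. pit m \<omega> z - piZ z)) a"
    and alpha: "0 < \<alpha>" "\<alpha> < 1" and q_def: "q = VaR D mu \<alpha>"
    and f_mu: "distributed D lborel mu (\<lambda>x. ennreal (f_mu x))" and f_mu_pos: "f_mu q > 0"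
    and dens: "\<exists>N (B::real). \<forall>m\<ge>N. AE \<omega> in M.
        distributed D (lborel :: (real \<times> real) measure)
          (\<lambda>z. (mu z, (mut m \<omega> z - mu z) / a m)) (\<lambda>(x, u). ennreal (b m \<omega> x u))
      \<and> (\<forall>x u. ((\<lambda>x. b m \<omega> x u) has_real_derivative b1 m \<omega> x u) (at x)
               \<and> ((\<lambda>x. b1 m \<omega> x u) has_real_derivative b2 m \<omega> x u) (at x)
               \<and> 0 \<le> b m \<omega> x u \<and> b m \<omega> x u \<le> bb 0 m \<omega> u
               \<and> \<bar>b1 m \<omega> x u\<bar> \<le> bb 1 m \<omega> u \<and> \<bar>b2 m \<omega> x u\<bar> \<le> bb 2 m \<omega> u)
      \<and> (\<forall>i\<le>2. \<forall>u. 0 \<le> bb i m \<omega> u)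
      \<and> (\<forall>i\<le>2. \<forall>r\<le>(3::nat).
            (\<integral>\<^sup>+ u. ennreal (\<bar>u\<bar> ^ r * bb i m \<omega> u) \<partial>lborel) \<le> ennreal B)"
  shows "big_OP M (\<lambda>m \<omega>. ereal (cdf_at D (mut m \<omega>) q - cdf_at D mu q)) a"
proof -
  interpret M: prob_space M by fact
  interpret D: prob_space D by fact
  text \<open>The law of \<open>\<mu>(Z)\<close> depends neither on \<open>m\<close> nor on \<omega>, so the density
    bound at a single \<open>m\<close> and a single \<omega> (the almost-sure event is nonempty) suffices.\<close>
  have "\<exists>N B \<omega>.
      distributed D (lborel :: (real \<times> real) measure)
        (\<lambda>z. (mu z, (mut N \<omega> z - mu z) / a N)) (\<lambda>(x, u). ennreal (b N \<omega> x u))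
      \<and> (\<forall>x u. b N \<omega> x u \<le> bb 0 N \<omega> u)
      \<and> (\<integral>\<^sup>+ u. ennreal (bb 0 N \<omega> u) \<partial>lborel) \<le> ennreal B"
    using dens
    apply (elim exE)
    subgoal for N B
      by (rule exI[of _ N], rule exI[of _ B], drule spec[of _ N], erule impE, rule order_refl,
          drule eventually_happens'[OF M.ae_filter_bot], erule exE, rule exI)
        (auto dest!: spec[of _ "0::nat"])
    done
  then obtain N B \<omega> where
    dist: "distributed D (lborel :: (real \<times> real) measure)
        (\<lambda>z. (mu z, (mut N \<omega> z - mu z) / a N)) (\<lambda>(x, u). ennreal (b N \<omega> x u))"
    and b_le: "\<And>x u. b N \<omega> x u \<le> bb 0 N \<omega> u"
    and "(\<integral>\<^sup>+ u. ennreal (bb 0 N \<omega> u) \<partial>lborel) \<le> ennreal B"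
    by blast
  then have integral_le: "(\<integral>\<^sup>+ u. ennreal (bb 0 N \<omega> u) \<partial>lborel) \<le> ennreal (max B 0)"
    by (simp add: ennreal_max_0)
  have lipschitz: "cdf_at D mu t - cdf_at D mu s \<le> max B 0 * (t - s)" if "s \<le> t" for s t
    using measure_Ioc_le_of_joint_density_bound[OF dist b_le integral_le _ that]
    by (simp add: D.cdf_at_diff_eq_measure_Ioc[OF meas_mu that])
  show ?thesis
  proof (rule big_OP_le[OF rate_mu])
    fix m \<omega> c
    assume "\<bar>sup_norm D (\<lambda>z. mut m \<omega> z - mu z)\<bar> \<le> ereal c"
    then have "sup_norm D (\<lambda>z. mut m \<omega> z - mu z) \<le> ereal c"
      by (cases "sup_norm D (\<lambda>z. mut m \<omega> z - mu z)") auto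
    then have "AE z in D. \<bar>mut m \<omega> z - mu z\<bar> \<le> c"
      by (rule AE_abs_le_of_sup_norm_le)
    then show "\<bar>ereal (cdf_at D (mut m \<omega>) q - cdf_at D mu q)\<bar> \<le> ereal (max B 0 * c)"
      using D.cdf_at_perturb_le[OF meas_mu meas_mut lipschitz] by simp
  qed
qed

end
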